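(* Let $d=2^n$ and let $\mathcal{C}_i$ and $\mathcal{C}_j$ ($i\neq j$) be two disjoint maximal commuting classes of $n$-qubit Pauli operators. Then every operator $U\in\mathcal{C}_i$ commutes with exactly $2^{n-1}-1$ elements of $\mathcal{C}_j$, and this set of $2^{n-1}-1$ elements is unique to $U$: no two distinct elements of $\mathcal{C}_i$ commute with the same set of $2^{n-1}-1$ operators of $\mathcal{C}_j$.
   Context: The $n$-qubit Pauli operators are the $4^n$ tensor products $P_1\otimes\cdots\otimes P_n$ with $P_k\in\{I,X,Y,Z\}$; products are taken up to a phase. A maximal commuting class is a set of $2^n-1$ mutually commuting non-identity $n$-qubit Pauli operators; together with the identity it forms (up to phases) an abelian group generated by $n$ of its elements. *)

theory Defs
  imports Complex_Main
begin

datatype pauli1 = PI | PX | PY | PZ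

fun pmul1 :: "pauli1 \<Rightarrow> pauli1 \<Rightarrow> complex \<times> pauli1" where
  "pmul1 PI q = (1, q)"
| "pmul1 p PI = (1, p)"
| "pmul1 PX PX = (1, PI)"
| "pmul1 PY PY = (1, PI)"
| "pmul1 PZ PZ = (1, PI)"
| "pmul1 PX PY = (\<i>, PZ)"
| "pmul1 PY PX = (-\<i>, PZ)"
| "pmul1 PY PZ = (\<i>, PX)"
| "pmul1 PZ PY = (-\<i>, PX)"
| "pmul1 PZ PX = (\<i>, PY)"
| "pmul1 PX PZ = (-\<i>, PY)"

text \<open>An n-qubit Pauli operator P_1 \<otimes> ... \<otimes> P_n is a list of length n.
  The set of all n-qubit Pauli operators:\<close>
definition paulis :: "nat \<Rightarrow> pauli1 list set" where
  "paulis n = {P. length P = n}"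

definition pauli_id :: "nat \<Rightarrow> pauli1 list" where
  "pauli_id n = replicate n PI"

definition pmul :: "pauli1 list \<Rightarrow> pauli1 list \<Rightarrow> complex \<times> pauli1 list" where
  "pmul P Q = (let r = map2 pmul1 P Q in (prod_list (map fst r), map snd r))"

definition commutes :: "pauli1 list \<Rightarrow> pauli1 list \<Rightarrow> bool" where
  "commutes P Q \<longleftrightarrow> pmul P Q = pmul Q P"

definition max_commuting_class :: "nat \<Rightarrow> pauli1 list set \<Rightarrow> bool" where
  "max_commuting_class n C \<longleftrightarrow>
     C \<subseteq> paulis n \<and> pauli_id n \<notin> C \<and> card C = 2 ^ n - 1 \<and>
     (\<forall>P\<in>C. \<forall>Q\<in>C. commutes P Q)"

end

theory Submission
  imports Defs
begin

text \<open>Up to phases, n-qubit Pauli operators form the vector space \<open>\<bbbF>\<^sub>2\<^sup>2\<^sup>n\<close> and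
  (anti)commutation is the symplectic form on it. Adding the identity to a maximal commuting
  class gives an isotropic subgroup of order \<open>2\<^sup>n\<close>, i.e. a Lagrangian subspace; such a
  subspace is closed under products and contains everything commuting with all its elements.
  For \<open>U\<close> in the class \<open>\<C>\<^sub>i\<close> but outside the Lagrangian \<open>L\<^sub>j\<close>, commuting with \<open>U\<close> is a
  nonzero linear functional on \<open>L\<^sub>j\<close>, so its kernel has \<open>2\<^sup>n\<^sup>-\<^sup>1\<close> elements, the identity
  among them. If \<open>U, U'\<close> have the same kernel, then \<open>UU'\<close> commutes with all of \<open>L\<^sub>j\<close>, so it
  lies in \<open>L\<^sub>i \<inter> L\<^sub>j = {I}\<close>, whence \<open>U = U'\<close>. The bound \<open>2\<^sup>n\<close> on isotropic subgroups is
  proved by induction on \<open>n\<close>, restricting to the elements commuting with \<open>Z\<close> on the first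
  qubit and dropping that qubit.\<close>

definition mult1 :: "pauli1 \<Rightarrow> pauli1 \<Rightarrow> pauli1" where
  "mult1 a b = snd (pmul1 a b)"

definition anticommutes1 :: "pauli1 \<Rightarrow> pauli1 \<Rightarrow> bool" where
  "anticommutes1 a b \<longleftrightarrow> a \<noteq> PI \<and> b \<noteq> PI \<and> a \<noteq> b"

definition mult :: "pauli1 list \<Rightarrow> pauli1 list \<Rightarrow> pauli1 list" where
  "mult P Q = map2 mult1 P Q"

fun anticommutes :: "pauli1 list \<Rightarrow> pauli1 list \<Rightarrow> bool" where
  "anticommutes (a # P) (b # Q) \<longleftrightarrow> anticommutes1 a b \<noteq> anticommutes P Q"
| "anticommutes _ _ \<longleftrightarrow> False"

lemma mult1_commute: "mult1 a b = mult1 b a"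
  by (cases a; cases b) (simp_all add: mult1_def)

lemma mult1_cancel_left: "mult1 a (mult1 a b) = b"
  by (cases a; cases b) (simp_all add: mult1_def)

lemma mult1_eq_PI_iff: "mult1 a b = PI \<longleftrightarrow> a = b"
  by (cases a; cases b) (simp_all add: mult1_def)

lemma anticommutes1_sym: "anticommutes1 a b \<longleftrightarrow> anticommutes1 b a"
  by (auto simp: anticommutes1_def)

lemma anticommutes1_mult1_left:
  "anticommutes1 (mult1 a b) c \<longleftrightarrow> anticommutes1 a c \<noteq> anticommutes1 b c"
  by (cases a; cases b; cases c) (simp_all add: mult1_def anticommutes1_def)

lemma fst_pmul1_swap: "fst (pmul1 a b) = (if anticommutes1 a b then -1 else 1) * fst (pmul1 b a)"
  by (cases a; cases b) (simp_all add: anticommutes1_def)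

lemma fst_pmul1_nonzero: "fst (pmul1 a b) \<noteq> 0"
  by (cases a; cases b) simp_all

subsection \<open>Products and the symplectic form\<close>

lemma mult_Cons [simp]: "mult (a # P) (b # Q) = mult1 a b # mult P Q"
  by (simp add: mult_def)

lemma mult_Nil [simp]: "mult [] Q = []" "mult P [] = []"
  by (simp_all add: mult_def)

lemma length_mult [simp]: "length (mult P Q) = min (length P) (length Q)"
  by (simp add: mult_def)

lemma tl_mult: "tl (mult P Q) = mult (tl P) (tl Q)"
  by (cases P; cases Q) simp_all

lemma mult_commute: "mult P Q = mult Q P"
proof (induction P arbitrary: Q)
  case (Cons a P)
  then show ?case by (cases Q) (simp_all add: mult1_commute)
qed simp

lemma mult_cancel_left: "length P = length Q \<Longrightarrow> mult P (mult P Q) = Q"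
  by (induction P Q rule: list_induct2) (simp_all add: mult1_cancel_left)

lemma mult_eq_pauli_id_iff:
  "length P = n \<Longrightarrow> length Q = n \<Longrightarrow> mult P Q = pauli_id n \<longleftrightarrow> P = Q"
  unfolding pauli_id_def
  by (induction P arbitrary: Q n) (auto simp: length_Suc_conv mult1_eq_PI_iff)

lemma mult_in_paulis: "P \<in> paulis n \<Longrightarrow> Q \<in> paulis n \<Longrightarrow> mult P Q \<in> paulis n"
  by (simp add: paulis_def)

lemma pauli_id_in_paulis: "pauli_id n \<in> paulis n"
  by (simp add: paulis_def pauli_id_def)

lemma finite_paulis: "finite (paulis n)"
proof -
  have "(UNIV :: pauli1 set) \<subseteq> {PI, PX, PY, PZ}"
    using pauli1.exhaust by blast
  then have "finite (UNIV :: pauli1 set)"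
    by (rule finite_subset) simp
  then show ?thesis
    using finite_lists_length_eq[of "UNIV :: pauli1 set" n] by (simp add: paulis_def)
qed

lemma anticommutes_sym: "anticommutes P Q \<longleftrightarrow> anticommutes Q P"
  by (induction P Q rule: anticommutes.induct) (auto simp: anticommutes1_sym)

lemma anticommutes_irrefl: "\<not> anticommutes P P"
  by (induction P) (simp_all add: anticommutes1_def)

lemma not_anticommutes_pauli_id [simp]: "\<not> anticommutes P (pauli_id n)"
  unfolding pauli_id_def
proof (induction P arbitrary: n)
  case (Cons a P)
  then show ?case by (cases n) (simp_all add: anticommutes1_def)
qed simp

lemma not_pauli_id_anticommutes [simp]: "\<not> anticommutes (pauli_id n) P"
  using anticommutes_sym not_anticommutes_pauli_id by blast

lemma anticommutes_mult_left:
  "length P = length R \<Longrightarrow> length Q = length R \<Longrightarrow>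
     anticommutes (mult P Q) R \<longleftrightarrow> anticommutes P R \<noteq> anticommutes Q R"
proof (induction P R arbitrary: Q rule: list_induct2)
  case (Cons a P c R)
  then show ?case by (cases Q) (auto simp: anticommutes1_mult1_left)
qed simp

lemma anticommutes_mult_right:
  "length P = length R \<Longrightarrow> length Q = length R \<Longrightarrow>
     anticommutes R (mult P Q) \<longleftrightarrow> anticommutes R P \<noteq> anticommutes R Q"
  using anticommutes_mult_left anticommutes_sym by metis

lemma pmul_Cons:
  "pmul (a # P) (b # Q) = (fst (pmul1 a b) * fst (pmul P Q), mult1 a b # snd (pmul P Q))"
  by (simp add: pmul_def Let_def mult1_def)

lemma pmul_Nil [simp]: "pmul [] Q = (1, [])" "pmul P [] = (1, [])"
  by (simp_all add: pmul_def)

lemma snd_pmul: "snd (pmul P Q) = mult P Q"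
  by (simp add: pmul_def Let_def mult_def mult1_def split_def)

lemma fst_pmul_nonzero: "fst (pmul P Q) \<noteq> 0"
proof (induction P arbitrary: Q)
  case (Cons a P)
  then show ?case by (cases Q) (simp_all add: pmul_Cons fst_pmul1_nonzero)
qed simp

lemma fst_pmul_swap:
  "length P = length Q \<Longrightarrow> fst (pmul P Q) = (if anticommutes P Q then -1 else 1) * fst (pmul Q P)"
proof (induction P Q rule: list_induct2)
  case (Cons a P b Q)
  then show ?case using fst_pmul1_swap[of a b] by (auto simp: pmul_Cons)
qed simp

lemma commutes_iff_not_anticommutes:
  assumes "length P = length Q"
  shows "commutes P Q \<longleftrightarrow> \<not> anticommutes P Q"
proof -
  have "snd (pmul P Q) = snd (pmul Q P)"
    by (simp add: snd_pmul mult_commute)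
  then show ?thesis
    using fst_pmul_swap[OF assms] fst_pmul_nonzero[of Q P] unfolding commutes_def
    by (cases "pmul P Q"; cases "pmul Q P") auto
qed

subsection \<open>Isotropic subgroups\<close>

definition isotropic :: "pauli1 list set \<Rightarrow> bool" where
  "isotropic S \<longleftrightarrow> (\<forall>P\<in>S. \<forall>Q\<in>S. \<not> anticommutes P Q)"

definition mult_closed :: "pauli1 list set \<Rightarrow> bool" where
  "mult_closed W \<longleftrightarrow> (\<forall>P\<in>W. \<forall>Q\<in>W. mult P Q \<in> W)"

lemma card_eq_double_card_commutant:
  assumes W: "W \<subseteq> paulis n" "mult_closed W" and C: "C \<in> paulis n"
    and V: "V \<in> W" "anticommutes C V"
  shows "card W = 2 * card {P\<in>W. \<not> anticommutes C P}"
proof -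
  let ?A = "{P\<in>W. anticommutes C P}" and ?B = "{P\<in>W. \<not> anticommutes C P}"
  have len: "length P = n" if "P \<in> W" for P
    using that W(1) by (auto simp: paulis_def)
  have cancel: "mult V (mult V P) = P" if "P \<in> W" for P
    using that V(1) len mult_cancel_left by simp
  have flip: "mult V P \<in> W \<and> (anticommutes C (mult V P) \<longleftrightarrow> \<not> anticommutes C P)" if "P \<in> W" for P
    using that V W(2) len[of V] len[of P] C anticommutes_mult_right[of V C P]
    by (simp add: mult_closed_def paulis_def)
  have "bij_betw (mult V) ?B ?A"
  proof (rule bij_betw_byWitness[where f' = "mult V"])
    show "\<forall>P\<in>?B. mult V (mult V P) = P" "\<forall>P\<in>?A. mult V (mult V P) = P"
      using cancel by simp_all
    show "mult V ` ?B \<subseteq> ?A" "mult V ` ?A \<subseteq> ?B"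
      using flip by auto
  qed
  then have "card ?B = card ?A"
    by (rule bij_betw_same_card)
  moreover have "card W = card ?A + card ?B"
  proof -
    have "finite W"
      using W finite_paulis finite_subset by blast
    then have "card (?A \<union> ?B) = card ?A + card ?B"
      by (intro card_Un_disjoint) auto
    moreover have "?A \<union> ?B = W"
      by blast
    ultimately show ?thesis
      by simp
  qed
  ultimately show ?thesis
    by simp
qed

lemma card_le_double_card_commutant:
  assumes "W \<subseteq> paulis n" "mult_closed W" "C \<in> paulis n"
  shows "card W \<le> 2 * card {P\<in>W. \<not> anticommutes C P}"
proof (cases "\<exists>V\<in>W. anticommutes C V")
  case True
  then obtain V where "V \<in> W" "anticommutes C V"
    by blast
  then show ?thesis
    using card_eq_double_card_commutant[OF assms] by simp
next
  case False
  then have "{P\<in>W. \<not> anticommutes C P} = W"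
    by blast
  then show ?thesis
    by simp
qed

lemma mult_closed_commutant:
  assumes "W \<subseteq> paulis n" "mult_closed W" "C \<in> paulis n"
  shows "mult_closed {P\<in>W. \<not> anticommutes C P}"
  unfolding mult_closed_def
proof (intro ballI)
  fix P Q
  assume "P \<in> {P\<in>W. \<not> anticommutes C P}" "Q \<in> {P\<in>W. \<not> anticommutes C P}"
  moreover have "length P = n" "length Q = n" "length C = n"
    using calculation assms(1,3) by (auto simp: paulis_def)
  ultimately show "mult P Q \<in> {P\<in>W. \<not> anticommutes C P}"
    using assms(2) anticommutes_mult_right[of P C Q] by (simp add: mult_closed_def)
qed

lemma commutant_first_Z_Cons:
  assumes "P \<in> paulis (Suc n)" "\<not> anticommutes (PZ # pauli_id n) P"
  obtains a T where "P = a # T" "a \<in> {PI, PZ}" "T \<in> paulis n"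
proof -
  obtain a T where "P = a # T" "T \<in> paulis n"
    using assms(1) by (cases P) (auto simp: paulis_def)
  with assms(2) show thesis
    by (cases a) (auto intro: that simp: anticommutes1_def)
qed

lemma tl_commutant_first_Z:
  assumes W: "W \<subseteq> paulis (Suc n)" "mult_closed W" "isotropic W"
  defines "W1 \<equiv> {P\<in>W. \<not> anticommutes (PZ # pauli_id n) P}"
  shows "tl ` W1 \<subseteq> paulis n" "mult_closed (tl ` W1)" "isotropic (tl ` W1)"
proof -
  have W1_Cons: "\<exists>a T. P = a # T \<and> a \<in> {PI, PZ} \<and> T \<in> paulis n" if "P \<in> W1" for P
    using that W(1) commutant_first_Z_Cons unfolding W1_def by blast
  show "tl ` W1 \<subseteq> paulis n"
    using W1_Cons by force
  have "PZ # pauli_id n \<in> paulis (Suc n)"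
    using pauli_id_in_paulis[of n] by (simp add: paulis_def)
  then have closed: "mult_closed W1"
    unfolding W1_def using mult_closed_commutant W by blast
  show "mult_closed (tl ` W1)"
    unfolding mult_closed_def
  proof (intro ballI)
    fix T T' assume "T \<in> tl ` W1" "T' \<in> tl ` W1"
    then obtain P P' where "P \<in> W1" "P' \<in> W1" "T = tl P" "T' = tl P'"
      by blast
    with closed show "mult T T' \<in> tl ` W1"
      unfolding mult_closed_def by (metis image_eqI tl_mult)
  qed
  show "isotropic (tl ` W1)"
    unfolding isotropic_def
  proof (intro ballI)
    fix T T' assume "T \<in> tl ` W1" "T' \<in> tl ` W1"
    then obtain P P' where P: "P \<in> W1" "P' \<in> W1" "T = tl P" "T' = tl P'"
      by blast
    then obtain a b where "P = a # T" "P' = b # T'" "a \<in> {PI, PZ}" "b \<in> {PI, PZ}"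
      using W1_Cons[OF P(1)] W1_Cons[OF P(2)] by force
    moreover have "\<not> anticommutes P P'"
      using P W(3) by (simp add: isotropic_def W1_def)
    ultimately show "\<not> anticommutes T T'"
      by (auto simp: anticommutes1_def)
  qed
qed

lemma card_isotropic_mult_closed_le:
  "W \<subseteq> paulis n \<Longrightarrow> mult_closed W \<Longrightarrow> isotropic W \<Longrightarrow> card W \<le> 2 ^ n"
proof (induction n arbitrary: W)
  case 0
  then have "W \<subseteq> {[]}"
    by (auto simp: paulis_def)
  then show ?case
    using card_mono[of "{[]}" W] by simp
next
  case (Suc n)
  define Z where "Z = PZ # pauli_id n"
  define X where "X = PX # pauli_id n"
  have Z: "Z \<in> paulis (Suc n)" and X: "X \<in> paulis (Suc n)"
    using pauli_id_in_paulis[of n] by (auto simp: Z_def X_def paulis_def)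
  define W1 where "W1 = {P\<in>W. \<not> anticommutes Z P}"
  have tl_W1: "tl ` W1 \<subseteq> paulis n" "card (tl ` W1) \<le> 2 ^ n"
    using tl_commutant_first_Z[OF Suc.prems] Suc.IH unfolding W1_def Z_def by blast+
  have half: "card W \<le> 2 * card W1"
    unfolding W1_def using card_le_double_card_commutant Suc.prems Z by blast
  show ?case
  proof (cases "inj_on tl W1")
    case True
    then show ?thesis
      using half tl_W1 card_image by fastforce
  next
    case False
    \<comment> \<open>Two elements of \<open>W1\<close> with equal tails multiply to \<open>Z\<close>, so all of \<open>W\<close> commutes
      with \<open>Z\<close>; those also commuting with \<open>X\<close> start with \<open>I\<close> and form half of \<open>W\<close>.\<close>
    then obtain P Q where PQ: "P \<in> W1" "Q \<in> W1" "P \<noteq> Q" "tl P = tl Q"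
      by (auto simp: inj_on_def)
    have first_Z_Cons: "\<exists>a T. P = a # T \<and> a \<in> {PI, PZ} \<and> T \<in> paulis n" if "P \<in> W1" for P
      using that Suc.prems(1) commutant_first_Z_Cons[of P n] unfolding W1_def Z_def by blast
    obtain a b T where "P = a # T" "Q = b # T" "a \<in> {PI, PZ}" "b \<in> {PI, PZ}" "T \<in> paulis n"
      using first_Z_Cons[OF PQ(1)] first_Z_Cons[OF PQ(2)] PQ(4) by force
    moreover have "mult T T = pauli_id n"
      using \<open>T \<in> paulis n\<close> mult_eq_pauli_id_iff by (simp add: paulis_def)
    ultimately have "mult P Q = Z"
      using PQ(3) by (auto simp: Z_def mult1_def)
    then have "Z \<in> W"
      using PQ Suc.prems(2) by (auto simp: W1_def mult_closed_def)
    then have W1_eq: "W1 = W"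
      using Suc.prems(3) by (auto simp: W1_def isotropic_def)
    define W0 where "W0 = {P\<in>W. \<not> anticommutes X P}"
    have "anticommutes X Z"
      by (simp add: X_def Z_def anticommutes1_def)
    then have "card W = 2 * card W0"
      unfolding W0_def using card_eq_double_card_commutant Suc.prems X \<open>Z \<in> W\<close> by blast
    moreover have "inj_on tl W0"
    proof (rule inj_onI)
      fix P Q assume "P \<in> W0" "Q \<in> W0" "tl P = tl Q"
      moreover have "hd P = PI" if P: "P \<in> W0" for P
      proof -
        obtain a T where "P = a # T" "a \<in> {PI, PZ}"
          using P first_Z_Cons W1_eq unfolding W0_def by blast
        with P show ?thesis
          by (auto simp: W0_def X_def anticommutes1_def)
      qed
      moreover have "P \<noteq> []" "Q \<noteq> []"
        using calculation(1,2) Suc.prems(1) by (auto simp: W0_def paulis_def)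
      ultimately show "P = Q"
        by (metis list.collapse)
    qed
    then have "card W0 = card (tl ` W0)"
      by (rule card_image[symmetric])
    moreover have "card (tl ` W0) \<le> card (tl ` W1)"
      using tl_W1(1) finite_paulis W1_eq W0_def by (intro card_mono) (auto intro: finite_subset)
    ultimately show ?thesis
      using tl_W1(2) by simp
  qed
qed

inductive_set generated :: "pauli1 list set \<Rightarrow> pauli1 list set" for S where
  base: "P \<in> S \<Longrightarrow> P \<in> generated S"
| mult: "P \<in> generated S \<Longrightarrow> Q \<in> generated S \<Longrightarrow> mult P Q \<in> generated S"

lemma generated_subset_paulis:
  assumes "S \<subseteq> paulis n"
  shows "generated S \<subseteq> paulis n"
proof
  fix P assume "P \<in> generated S"
  then show "P \<in> paulis n"
    by induction (use assms in \<open>auto intro: mult_in_paulis\<close>)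
qed

lemma mult_closed_generated: "mult_closed (generated S)"
  by (simp add: mult_closed_def generated.mult)

lemma commutes_generated:
  assumes "S \<subseteq> paulis n" "C \<in> paulis n" "\<forall>P\<in>S. \<not> anticommutes C P" "P \<in> generated S"
  shows "\<not> anticommutes C P"
  using assms(4)
proof induction
  case (mult P Q)
  then have "P \<in> paulis n" "Q \<in> paulis n"
    using generated_subset_paulis[OF assms(1)] by auto
  with mult.IH show ?case
    using assms(2) anticommutes_mult_right by (simp add: paulis_def)
qed (use assms(3) in blast)

lemma isotropic_generated:
  assumes "S \<subseteq> paulis n" "isotropic S"
  shows "isotropic (generated S)"
proof -
  have S_commutes: "\<not> anticommutes P Q" if "P \<in> S" "Q \<in> generated S" for P Q
    using commutes_generated[OF assms(1) _ _ that(2), of P] that(1) assms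
    by (auto simp: isotropic_def)
  show ?thesis
    unfolding isotropic_def
  proof (intro ballI)
    fix P Q assume P: "P \<in> generated S" and Q: "Q \<in> generated S"
    have "\<forall>R\<in>S. \<not> anticommutes Q R"
      using S_commutes[OF _ Q] anticommutes_sym by blast
    moreover have "Q \<in> paulis n"
      using Q generated_subset_paulis[OF assms(1)] by blast
    ultimately have "\<not> anticommutes Q P"
      using commutes_generated[OF assms(1) _ _ P] by blast
    then show "\<not> anticommutes P Q"
      by (simp add: anticommutes_sym)
  qed
qed

lemma card_isotropic_le:
  assumes "S \<subseteq> paulis n" "isotropic S"
  shows "card S \<le> 2 ^ n"
proof -
  have G: "generated S \<subseteq> paulis n"
    by (rule generated_subset_paulis[OF assms(1)])
  have "card S \<le> card (generated S)"
    by (intro card_mono finite_subset[OF G finite_paulis] subsetI generated.base)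
  also have "\<dots> \<le> 2 ^ n"
    by (rule card_isotropic_mult_closed_le[OF G mult_closed_generated isotropic_generated[OF assms]])
  finally show ?thesis .
qed

subsection \<open>Lagrangian subgroups\<close>

definition lagrangian :: "nat \<Rightarrow> pauli1 list set \<Rightarrow> bool" where
  "lagrangian n L \<longleftrightarrow> L \<subseteq> paulis n \<and> isotropic L \<and> card L = 2 ^ n"

lemma max_commuting_class_lagrangian:
  assumes "max_commuting_class n C"
  shows "lagrangian n (insert (pauli_id n) C)"
proof -
  have C: "C \<subseteq> paulis n" "pauli_id n \<notin> C" "card C = 2 ^ n - 1" "\<forall>P\<in>C. \<forall>Q\<in>C. commutes P Q"
    using assms by (auto simp: max_commuting_class_def)
  then have "isotropic C"
    by (auto simp: isotropic_def commutes_iff_not_anticommutes paulis_def subset_iff)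
  moreover have "finite C"
    using C(1) finite_paulis finite_subset by blast
  ultimately show ?thesis
    using C pauli_id_in_paulis[of n] by (simp add: lagrangian_def isotropic_def)
qed

lemma lagrangian_mult_closed:
  assumes "lagrangian n L"
  shows "mult_closed L"
proof -
  have L: "L \<subseteq> paulis n" "isotropic L" "card L = 2 ^ n"
    using assms by (auto simp: lagrangian_def)
  have "L \<subseteq> generated L"
    by (auto intro: generated.base)
  moreover have "card (generated L) \<le> card L"
    using card_isotropic_mult_closed_le[OF generated_subset_paulis mult_closed_generated
        isotropic_generated] L by simp
  moreover have "finite (generated L)"
    using generated_subset_paulis[OF L(1)] finite_paulis finite_subset by blast
  ultimately have "generated L = L"
    by (metis card_seteq)
  then show ?thesis
    by (metis mult_closed_generated)
qed

lemma lagrangian_maximal: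
  assumes "lagrangian n L" "C \<in> paulis n" "\<forall>P\<in>L. \<not> anticommutes C P"
  shows "C \<in> L"
proof (rule ccontr)
  assume "C \<notin> L"
  have "insert C L \<subseteq> paulis n" "isotropic (insert C L)"
    using assms anticommutes_sym anticommutes_irrefl
    by (auto simp: lagrangian_def isotropic_def)
  then have "card (insert C L) \<le> 2 ^ n"
    by (rule card_isotropic_le)
  moreover have "finite L"
    using assms(1) finite_paulis finite_subset by (auto simp: lagrangian_def)
  ultimately show False
    using \<open>C \<notin> L\<close> assms(1) by (simp add: lagrangian_def)
qed

lemma card_commutant_lagrangian:
  assumes L: "lagrangian n L" and U: "U \<in> paulis n" "U \<notin> L"
  shows "card {V\<in>L. \<not> anticommutes U V} = 2 ^ (n - 1)"
proof -
  obtain V where "V \<in> L" "anticommutes U V"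
    using lagrangian_maximal[OF L U(1)] U(2) by blast
  then have "2 ^ n = 2 * card {V\<in>L. \<not> anticommutes U V}"
    using card_eq_double_card_commutant[OF _ lagrangian_mult_closed[OF L] U(1)] L
    by (simp add: lagrangian_def)
  then show ?thesis
    by (cases n) simp_all
qed

lemma inj_on_commutant_lagrangian:
  assumes L: "lagrangian n L" and L': "lagrangian n L'" and disj: "L \<inter> L' \<subseteq> {pauli_id n}"
  shows "inj_on (\<lambda>U. {V\<in>L'. \<not> anticommutes U V}) L"
proof (rule inj_onI)
  fix U U' assume U: "U \<in> L" "U' \<in> L"
    and eq: "{V\<in>L'. \<not> anticommutes U V} = {V\<in>L'. \<not> anticommutes U' V}"
  have len: "length U = n" "length U' = n" "\<forall>V\<in>L'. length V = n"
    using U L L' by (auto simp: lagrangian_def paulis_def)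
  have "mult U U' \<in> L'"
  proof (rule lagrangian_maximal[OF L'])
    show "mult U U' \<in> paulis n"
      using len by (simp add: paulis_def)
    show "\<forall>V\<in>L'. \<not> anticommutes (mult U U') V"
    proof
      fix V assume V: "V \<in> L'"
      then have "anticommutes U V \<longleftrightarrow> anticommutes U' V"
        using eq by (metis (mono_tags, lifting) mem_Collect_eq)
      then show "\<not> anticommutes (mult U U') V"
        using anticommutes_mult_left[of U V U'] len V by simp
    qed
  qed
  moreover have "mult U U' \<in> L"
    using U lagrangian_mult_closed[OF L] by (simp add: mult_closed_def)
  ultimately have "mult U U' = pauli_id n"
    using disj by blast
  then show "U = U'"
    using mult_eq_pauli_id_iff[of U n U'] len by simp
qed

theorem lemma3:
  fixes n :: nat and Ci Cj :: "pauli1 list set"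
  assumes "max_commuting_class n Ci" and "max_commuting_class n Cj"
    and "Ci \<inter> Cj = {}"
  shows "(\<forall>U\<in>Ci. card {V\<in>Cj. commutes U V} = 2 ^ (n - 1) - 1)
       \<and> inj_on (\<lambda>U. {V\<in>Cj. commutes U V}) Ci"
proof -
  let ?Li = "insert (pauli_id n) Ci" and ?Lj = "insert (pauli_id n) Cj"
  let ?commutant = "\<lambda>U. {V\<in>?Lj. \<not> anticommutes U V}"
  have Li: "lagrangian n ?Li" and Lj: "lagrangian n ?Lj"
    using assms(1,2) by (simp_all add: max_commuting_class_lagrangian)
  have Ci: "Ci \<subseteq> paulis n" "pauli_id n \<notin> Ci" and Cj: "Cj \<subseteq> paulis n" "pauli_id n \<notin> Cj"
    using assms(1,2) by (simp_all add: max_commuting_class_def)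
  have commutant: "?commutant U = insert (pauli_id n) {V\<in>Cj. commutes U V}" if "U \<in> Ci" for U
    using that Ci(1) Cj(1) by (auto simp: commutes_iff_not_anticommutes paulis_def subset_iff)
  have "card {V\<in>Cj. commutes U V} = 2 ^ (n - 1) - 1" if U: "U \<in> Ci" for U
  proof -
    have "finite {V\<in>Cj. commutes U V}"
      using finite_subset[OF Cj(1) finite_paulis] by simp
    moreover have "U \<notin> ?Lj"
      using U Ci(2) assms(3) by blast
    then have "card (?commutant U) = 2 ^ (n - 1)"
      using card_commutant_lagrangian[OF Lj] U Ci(1) by blast
    ultimately show ?thesis
      using commutant[OF U] Cj(2) by simp
  qed
  moreover have "inj_on ?commutant Ci"
  proof (rule inj_on_subset)
    show "inj_on ?commutant ?Li"
      using inj_on_commutant_lagrangian[OF Li Lj] assms(3) by blast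
  qed blast
  then have "inj_on (insert (pauli_id n) \<circ> (\<lambda>U. {V\<in>Cj. commutes U V})) Ci"
    using inj_on_cong[of Ci ?commutant] commutant by simp
  then have "inj_on (\<lambda>U. {V\<in>Cj. commutes U V}) Ci"
    by (rule inj_on_imageI2)
  ultimately show ?thesis
    by blast
qed

end
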